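(* Let $c:[0,2\pi]\to\mathbb{R}^2$ be a regular closed plane curve of class $C^3$ with curvature $k_c$, let $r_0\in\mathbb{R}^2$, and let $p(t)=\langle c-r_0,N\rangle N+r_0$ be its pedal curve with respect to $r_0$. Then $p$ is strongly convex if and only if for all $t\in[0,2\pi)$ $$k_p(t):=\frac{k_c\{-2k_c\langle r_0-c,T\rangle^2+\langle r_0-c,N\rangle-2k_c\langle r_0-c,N\rangle^2\}}{\langle c,N\rangle\langle r_0,N\rangle+\langle c,T\rangle\langle r_0,T\rangle-\langle c,N\rangle^2-\langle r_0,T\rangle^2}>0,$$ where all quantities are evaluated at $t$.
   Context: For a regular plane curve $c(t)=(x(t),y(t))$, $T=\dot c/|\dot c|$ is the unit tangent, $N=(-\dot y,\dot x)/|\dot c|$ the unit normal, and $k_c=\langle \ddot c,N\rangle/|\dot c|^2$ the curvature, so that $\dot T=|\dot c|k_cN$, $\dot N=-|\dot c|k_cT$. The pedal curve of $c$ with respect to $r_0$ is $p(t)=\langle c(t)-r_0,N(t)\rangle N(t)+r_0$. For $u=(u_1,u_2),v=(v_1,v_2)$ set $u\times v=u_1v_2-u_2v_1$. A closed plane curve $p(t)$ is called strongly convex if $\dfrac{\dot p(t)\times\ddot p(t)}{p(t)\times\dot p(t)}>0$ for all $t$. *)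

theory Defs
  imports "HOL-Analysis.Analysis"
begin

definition cross2 :: "real \<times> real \<Rightarrow> real \<times> real \<Rightarrow> real" where
  "cross2 u v = fst u * snd v - snd u * fst v"

definition dot_c :: "(real \<Rightarrow> real \<times> real) \<Rightarrow> real \<Rightarrow> real \<times> real" where
  "dot_c c t = vector_derivative c (at t)"

definition ddot_c :: "(real \<Rightarrow> real \<times> real) \<Rightarrow> real \<Rightarrow> real \<times> real" where
  "ddot_c c t = vector_derivative (\<lambda>s. vector_derivative c (at s)) (at t)"

definition unit_tangent :: "(real \<Rightarrow> real \<times> real) \<Rightarrow> real \<Rightarrow> real \<times> real" where
  "unit_tangent c t = (1 / norm (dot_c c t)) *\<^sub>R dot_c c t"

definition unit_normal :: "(real \<Rightarrow> real \<times> real) \<Rightarrow> real \<Rightarrow> real \<times> real" where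
  "unit_normal c t = (1 / norm (dot_c c t)) *\<^sub>R (- snd (dot_c c t), fst (dot_c c t))"

definition curvature :: "(real \<Rightarrow> real \<times> real) \<Rightarrow> real \<Rightarrow> real" where
  "curvature c t = inner (ddot_c c t) (unit_normal c t) / (norm (dot_c c t))\<^sup>2"

definition pedal :: "(real \<Rightarrow> real \<times> real) \<Rightarrow> real \<times> real \<Rightarrow> real \<Rightarrow> real \<times> real" where
  "pedal c r0 t = inner (c t - r0) (unit_normal c t) *\<^sub>R unit_normal c t + r0"

text \<open>A closed curve parametrised over one period [0,2pi) (extended 2pi-periodically).\<close>
definition strongly_convex :: "(real \<Rightarrow> real \<times> real) \<Rightarrow> bool" where
  "strongly_convex p \<longleftrightarrow>
     (\<forall>t\<in>{0..<2*pi}. cross2 (dot_c p t) (ddot_c p t) / cross2 (p t) (dot_c p t) > 0)"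

definition pedal_curvature_kp :: "(real \<Rightarrow> real \<times> real) \<Rightarrow> real \<times> real \<Rightarrow> real \<Rightarrow> real" where
  "pedal_curvature_kp c r0 t =
     (let k = curvature c t; T = unit_tangent c t; N = unit_normal c t in
      k * (- 2 * k * (inner (r0 - c t) T)\<^sup>2 + inner (r0 - c t) N - 2 * k * (inner (r0 - c t) N)\<^sup>2)
      / (inner (c t) N * inner r0 N + inner (c t) T * inner r0 T - (inner (c t) N)\<^sup>2 - (inner r0 T)\<^sup>2))"

definition regular_closed_C3 :: "(real \<Rightarrow> real \<times> real) \<Rightarrow> bool" where
  "regular_closed_C3 c \<longleftrightarrow>
     (\<forall>t. c (t + 2*pi) = c t) \<and>
     (\<exists>c1 c2 c3. (\<forall>t. (c has_vector_derivative c1 t) (at t)) \<and>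
                 (\<forall>t. (c1 has_vector_derivative c2 t) (at t)) \<and>
                 (\<forall>t. (c2 has_vector_derivative c3 t) (at t)) \<and>
                 continuous_on UNIV c3 \<and> (\<forall>t. c1 t \<noteq> 0))"

end

theory Submission
  imports Defs
begin

(* Write v = c', q = c - r0 and perp v for v rotated by pi/2. The pedal curve is
   p = (v \<times> q / |v|^2) perp v + r0, and its velocity is a scalar multiple p' = L V of
   V = <q,v> perp v + (v \<times> q) v with L = -(v \<times> c'') / |v|^4. Because V \<times> V = 0, the
   ratio (p' \<times> p'') / (p \<times> p') equals L (V \<times> V') / (p \<times> V): the derivative of L, the only
   place where the third derivative of c enters, cancels. Expanding the two cross products
   shows that the ratio is |c'|^2 k_p, so it has the sign of k_p. The identity is pointwise. *)

definition perp :: "real \<times> real \<Rightarrow> real \<times> real" where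
  "perp v = (- snd v, fst v)"

lemma inner_perp: "inner q (perp v) = cross2 v q"
  by (cases q) (simp add: perp_def cross2_def algebra_simps)

lemma cross2_scaleR_left [simp]: "cross2 (a *\<^sub>R u) v = a * cross2 u v"
  and cross2_scaleR_right [simp]: "cross2 u (a *\<^sub>R v) = a * cross2 u v"
  and cross2_add_left [simp]: "cross2 (u + u') v = cross2 u v + cross2 u' v"
  and cross2_add_right [simp]: "cross2 u (v + v') = cross2 u v + cross2 u v'"
  and cross2_minus_right [simp]: "cross2 u (- v) = - cross2 u v"
  and cross2_self [simp]: "cross2 u u = 0"
  by (simp_all add: cross2_def algebra_simps)

lemma bounded_bilinear_cross2: "bounded_bilinear cross2"
proof (rule bounded_bilinear.intro)
  show "\<exists>K. \<forall>u v. norm (cross2 u v) \<le> norm u * norm v * K"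
  proof (intro exI allI)
    fix u v :: "real \<times> real"
    have "\<bar>cross2 u v\<bar> \<le> \<bar>fst u\<bar> * \<bar>snd v\<bar> + \<bar>snd u\<bar> * \<bar>fst v\<bar>"
      unfolding cross2_def by (simp add: abs_mult[symmetric] abs_triangle_ineq4)
    also have "\<dots> \<le> norm u * norm v + norm u * norm v"
      using norm_fst_le[of "fst u" "snd u"] norm_snd_le[of "snd u" "fst u"]
        norm_fst_le[of "fst v" "snd v"] norm_snd_le[of "snd v" "fst v"]
      by (intro add_mono mult_mono) auto
    finally show "norm (cross2 u v) \<le> norm u * norm v * 2" by simp
  qed
qed (simp_all add: cross2_def algebra_simps)

lemma has_real_derivative_cross2 [derivative_intros]:
  assumes "(f has_vector_derivative f') (at x within s)" "(g has_vector_derivative g') (at x within s)"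
  shows "((\<lambda>x. cross2 (f x) (g x)) has_real_derivative cross2 (f x) g' + cross2 f' (g x)) (at x within s)"
  using bounded_bilinear.has_vector_derivative[OF bounded_bilinear_cross2 assms]
  by (simp add: has_real_derivative_iff_has_vector_derivative)

lemma has_real_derivative_inner [derivative_intros]:
  assumes "(f has_vector_derivative f') (at x within s)" "(g has_vector_derivative g') (at x within s)"
  shows "((\<lambda>x. inner (f x) (g x)) has_real_derivative inner (f x) g' + inner f' (g x)) (at x within s)"
  using bounded_bilinear.has_vector_derivative[OF bounded_bilinear_inner assms]
  by (simp add: has_real_derivative_iff_has_vector_derivative)

lemma has_vector_derivative_perp [derivative_intros]:
  "(f has_vector_derivative f') F \<Longrightarrow> ((\<lambda>x. perp (f x)) has_vector_derivative perp f') F"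
  by (rule bounded_linear.has_vector_derivative[of perp]) (auto intro!: bounded_linearI' simp: perp_def)

lemma cross2_ratio_of_rescaled_velocity:
  fixes p V :: "real \<Rightarrow> real \<times> real" and L :: "real \<Rightarrow> real"
  assumes p': "\<And>s. (p has_vector_derivative L s *\<^sub>R V s) (at s)"
    and L': "L differentiable (at t)" and V': "(V has_vector_derivative V') (at t)"
  shows "cross2 (dot_c p t) (ddot_c p t) / cross2 (p t) (dot_c p t)
    = L t * cross2 (V t) V' / cross2 (p t) (V t)"
proof -
  obtain l where l: "(L has_real_derivative l) (at t)"
    using L' real_differentiable_def by metis
  have dot: "dot_c p = (\<lambda>s. L s *\<^sub>R V s)"
    using vector_derivative_at[OF p'] by (auto simp: dot_c_def)
  have "ddot_c p t = L t *\<^sub>R V' + l *\<^sub>R V t"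
    using vector_derivative_at[OF has_vector_derivative_scaleR[OF l V']]
    by (simp add: ddot_c_def dot[unfolded dot_c_def])
  then show ?thesis
    by (simp add: dot power2_eq_square)
qed

lemma pedal_eq_perp:
  "pedal c r0 t = (cross2 (dot_c c t) (c t - r0) / inner (dot_c c t) (dot_c c t)) *\<^sub>R perp (dot_c c t) + r0"
proof -
  have "unit_normal c t = (1 / norm (dot_c c t)) *\<^sub>R perp (dot_c c t)"
    by (simp add: unit_normal_def perp_def)
  then show ?thesis
    by (simp add: pedal_def inner_perp power2_norm_eq_inner[symmetric] power2_eq_square)
qed

definition pedal_tangent_dir :: "real \<times> real \<Rightarrow> real \<times> real \<Rightarrow> real \<times> real" where
  "pedal_tangent_dir v q = inner q v *\<^sub>R perp v + cross2 v q *\<^sub>R v"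

(* The left-hand side is what the derivative rules produce from the quotient form of
   pedal_eq_perp. *)
lemma pedal_velocity_identity:
  assumes "inner v v \<noteq> 0"
  shows "(cross2 v q / inner v v) *\<^sub>R perp w
      + ((cross2 w q * inner v v - cross2 v q * (inner v w + inner w v)) / (inner v v * inner v v)) *\<^sub>R perp v
    = - ((cross2 v w / (inner v v)\<^sup>2) *\<^sub>R pedal_tangent_dir v q)"
proof -
  obtain a b a2 b2 x y where "v = (a, b)" "w = (a2, b2)" "q = (x, y)"
    by (metis prod.collapse)
  with assms show ?thesis
    by (simp add: perp_def cross2_def pedal_tangent_dir_def power2_eq_square divide_simps)
      (simp add: algebra_simps)
qed

lemma has_vector_derivative_pedal:
  assumes c: "\<And>s. (c has_vector_derivative c1 s) (at s)"
    and c1: "(c1 has_vector_derivative w) (at t)" and nz: "c1 t \<noteq> 0"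
  shows "(pedal c r0 has_vector_derivative
      (- cross2 (c1 t) w / (inner (c1 t) (c1 t))\<^sup>2) *\<^sub>R pedal_tangent_dir (c1 t) (c t - r0)) (at t)"
proof -
  have "dot_c c = c1"
    using vector_derivative_at[OF c] by (auto simp: dot_c_def)
  then have p: "pedal c r0 = (\<lambda>s. (cross2 (c1 s) (c s - r0) / inner (c1 s) (c1 s)) *\<^sub>R perp (c1 s) + r0)"
    by (auto simp: pedal_eq_perp)
  show ?thesis
    unfolding p
    by (rule derivative_eq_intros c c1 refl | simp add: nz pedal_velocity_identity)+
qed

lemma has_vector_derivative_pedal_tangent_dir [derivative_intros]:
  assumes "(f has_vector_derivative f') (at x within s)" "(g has_vector_derivative g') (at x within s)"
  shows "((\<lambda>x. pedal_tangent_dir (f x) (g x)) has_vector_derivative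
      inner (g x) (f x) *\<^sub>R perp f' + (inner (g x) f' + inner g' (f x)) *\<^sub>R perp (f x)
      + cross2 (f x) (g x) *\<^sub>R f' + (cross2 (f x) g' + cross2 f' (g x)) *\<^sub>R f x) (at x within s)"
  unfolding pedal_tangent_dir_def
  by (rule derivative_eq_intros assms refl)+ (simp add: algebra_simps)

lemma cross2_pedal_tangent_dir_derivative:
  "cross2 (pedal_tangent_dir v q)
      (inner q v *\<^sub>R perp w + (inner q w + inner v v) *\<^sub>R perp v + cross2 v q *\<^sub>R w + cross2 w q *\<^sub>R v)
    = cross2 v q * (inner v v)\<^sup>2 + 2 * cross2 v w * ((cross2 v q)\<^sup>2 + (inner q v)\<^sup>2)"
proof -
  obtain a b a2 b2 x y where "v = (a, b)" "w = (a2, b2)" "q = (x, y)"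
    by (metis prod.collapse)
  then show ?thesis
    by (simp add: perp_def cross2_def pedal_tangent_dir_def power2_eq_square algebra_simps)
qed

lemma cross2_pedal_point_tangent_dir:
  assumes "inner v v \<noteq> 0"
  shows "cross2 ((cross2 v q / inner v v) *\<^sub>R perp v + r0) (pedal_tangent_dir v q)
    = inner q v * inner r0 v - cross2 v q * cross2 v r0 - (cross2 v q)\<^sup>2"
proof -
  obtain a b x y r1 r2 where "v = (a, b)" "q = (x, y)" "r0 = (r1, r2)"
    by (metis prod.collapse)
  with assms show ?thesis
    by (simp add: perp_def cross2_def pedal_tangent_dir_def power2_eq_square divide_simps)
      (simp add: algebra_simps)
qed

lemma pedal_curvature_kp_eq:
  assumes v: "dot_c c t = v" and w: "ddot_c c t = w" and q: "c t - r0 = q" and nz: "v \<noteq> 0"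
  shows "pedal_curvature_kp c r0 t
    = - cross2 v w * (cross2 v q * (inner v v)\<^sup>2 + 2 * cross2 v w * ((cross2 v q)\<^sup>2 + (inner q v)\<^sup>2))
      / ((inner v v)^3 * (inner q v * inner r0 v - cross2 v q * cross2 v r0 - (cross2 v q)\<^sup>2))"
proof -
  define s where "s = norm v"
  define K F W where "K = cross2 v w" and "F = cross2 v q" and "W = inner q v"
  define A D where "A = F * (s\<^sup>2)\<^sup>2 + 2 * K * (F\<^sup>2 + W\<^sup>2)"
    and "D = W * inner r0 v - F * cross2 v r0 - F\<^sup>2"
  have s: "s > 0" and n: "inner v v = s\<^sup>2"
    using nz by (simp_all add: s_def power2_norm_eq_inner)
  have T: "unit_tangent c t = (1 / s) *\<^sub>R v" and N: "unit_normal c t = (1 / s) *\<^sub>R perp v"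
    by (simp_all add: unit_tangent_def unit_normal_def perp_def v s_def)
  have k: "curvature c t = K / s^3"
    by (simp add: curvature_def v w N inner_perp K_def s_def[symmetric] power2_eq_square power3_eq_cube)
  have ct: "c t = q + r0"
    using q by auto
  have "inner (r0 - c t) (unit_tangent c t) = - W / s" "inner (r0 - c t) (unit_normal c t) = - F / s"
    by (simp_all add: ct T N W_def F_def inner_perp inner_diff_left)
  moreover have "K / s^3 * (- 2 * (K / s^3) * (- W / s)\<^sup>2 + - F / s - 2 * (K / s^3) * (- F / s)\<^sup>2)
      = - K * A / s^8"
    using s by (simp add: A_def field_simps power2_eq_square power3_eq_cube power4_eq_xxxx)
       (simp add: algebra_simps power_numeral_reduce)
  moreover have "inner (c t) (unit_normal c t) * inner r0 (unit_normal c t)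
      + inner (c t) (unit_tangent c t) * inner r0 (unit_tangent c t)
      - (inner (c t) (unit_normal c t))\<^sup>2 - (inner r0 (unit_tangent c t))\<^sup>2 = D / s\<^sup>2"
    using s by (simp add: ct T N D_def W_def F_def inner_perp inner_add_left field_simps power2_eq_square)
  ultimately have "pedal_curvature_kp c r0 t = - K * A / s^8 / (D / s\<^sup>2)"
    unfolding pedal_curvature_kp_def Let_def k by simp
  also have "\<dots> = - K * A / ((s\<^sup>2)^3 * D)"
    using s by (cases "D = 0") (simp_all add: field_simps power_numeral_reduce)
  finally show ?thesis
    by (simp add: n A_def D_def K_def F_def W_def)
qed

lemma pedal_convexity_ratio_eq:
  assumes c: "\<And>s. (c has_vector_derivative c1 s) (at s)"
    and c1: "\<And>s. (c1 has_vector_derivative c2 s) (at s)"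
    and c2: "c2 differentiable (at t)" and nz: "\<And>s. c1 s \<noteq> 0"
  shows "cross2 (dot_c (pedal c r0) t) (ddot_c (pedal c r0) t) / cross2 (pedal c r0 t) (dot_c (pedal c r0) t)
    = inner (c1 t) (c1 t) * pedal_curvature_kp c r0 t"
proof -
  define L where "L s = - cross2 (c1 s) (c2 s) / (inner (c1 s) (c1 s))\<^sup>2" for s
  define V where "V s = pedal_tangent_dir (c1 s) (c s - r0)" for s
  define v w q where "v = c1 t" and "w = c2 t" and "q = c t - r0"
  define X where "X = cross2 v q * (inner v v)\<^sup>2 + 2 * cross2 v w * ((cross2 v q)\<^sup>2 + (inner q v)\<^sup>2)"
  define D where "D = inner q v * inner r0 v - cross2 v q * cross2 v r0 - (cross2 v q)\<^sup>2"
  have n: "inner v v \<noteq> 0"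
    using nz by (simp add: v_def)
  have dot: "dot_c c t = v" "ddot_c c t = w"
    using vector_derivative_at[OF c] vector_derivative_at[OF c1]
    by (simp_all add: dot_c_def ddot_c_def v_def w_def)
  have p': "(pedal c r0 has_vector_derivative L s *\<^sub>R V s) (at s)" for s
    unfolding L_def V_def by (rule has_vector_derivative_pedal[OF c c1 nz])
  obtain w' where w': "(c2 has_vector_derivative w') (at t)"
    using c2 vector_derivative_works by blast
  have "L differentiable (at t)"
    unfolding L_def real_differentiable_def by (rule exI) (rule derivative_intros c1 w' | simp add: nz)+
  moreover have "(V has_vector_derivative
      inner q v *\<^sub>R perp w + (inner q w + inner v v) *\<^sub>R perp v + cross2 v q *\<^sub>R w + cross2 w q *\<^sub>R v) (at t)"
    (is "(V has_vector_derivative ?V') _")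
    unfolding V_def v_def w_def q_def
    by (rule derivative_eq_intros c c1 refl)+ (simp add: algebra_simps)
  ultimately have "cross2 (dot_c (pedal c r0) t) (ddot_c (pedal c r0) t) / cross2 (pedal c r0 t) (dot_c (pedal c r0) t)
      = L t * cross2 (V t) ?V' / cross2 (pedal c r0 t) (V t)"
    by (rule cross2_ratio_of_rescaled_velocity[OF p'])
  also have "cross2 (V t) ?V' = X"
    unfolding V_def X_def v_def q_def by (rule cross2_pedal_tangent_dir_derivative)
  also have "cross2 (pedal c r0 t) (V t) = D"
  proof -
    have "pedal c r0 t = (cross2 v q / inner v v) *\<^sub>R perp v + r0"
      by (simp add: pedal_eq_perp dot q_def)
    then show ?thesis
      unfolding V_def D_def v_def[symmetric] q_def[symmetric]
      by (simp only: cross2_pedal_point_tangent_dir[OF n])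
  qed
  also have "L t * X / D = inner v v * (- cross2 v w * X / ((inner v v)^3 * D))"
    using n by (cases "D = 0") (simp_all add: L_def v_def[symmetric] w_def[symmetric] field_simps power_numeral_reduce)
  also have "\<dots> = inner (c1 t) (c1 t) * pedal_curvature_kp c r0 t"
    by (simp add: pedal_curvature_kp_eq[OF dot q_def[symmetric]] nz v_def X_def D_def)
  finally show ?thesis .
qed

theorem mainTheorem3:
  fixes c :: "real \<Rightarrow> real \<times> real" and r0 :: "real \<times> real"
  assumes "regular_closed_C3 c"
  shows "strongly_convex (pedal c r0) \<longleftrightarrow> (\<forall>t\<in>{0..<2*pi}. pedal_curvature_kp c r0 t > 0)"
proof -
  obtain c1 c2 c3 where c1: "\<And>t. (c has_vector_derivative c1 t) (at t)"
    and c2: "\<And>t. (c1 has_vector_derivative c2 t) (at t)"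
    and c3: "\<And>t. (c2 has_vector_derivative c3 t) (at t)"
    and nz: "\<And>t. c1 t \<noteq> 0"
    using assms unfolding regular_closed_C3_def by metis
  have "c2 differentiable (at t)" for t
    using c3 by (rule differentiableI_vector)
  then have "cross2 (dot_c (pedal c r0) t) (ddot_c (pedal c r0) t) / cross2 (pedal c r0 t) (dot_c (pedal c r0) t)
      = inner (c1 t) (c1 t) * pedal_curvature_kp c r0 t" for t
    by (rule pedal_convexity_ratio_eq[OF c1 c2 _ nz])
  moreover have "inner (c1 t) (c1 t) > 0" for t
    using nz by simp
  ultimately show ?thesis
    by (simp add: strongly_convex_def zero_less_mult_iff inner_ge_zero[THEN leD])
qed

end
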